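(* Let $m,n\in\mathbb{N}$, $q\in(-1,1)\setminus\{0\}$, $\alpha_\pm\in(-1,1)$ and $\beta_\pm\in\mathbb{R}$. Then the operator $H$ defined in the context is self-adjoint in $\ell^2(\Lambda^{(n,m)},\Delta)$, i.e. $\langle H\psi,\phi\rangle_\Delta=\langle\psi,H\phi\rangle_\Delta$ for all $\psi,\phi\in\ell^2(\Lambda^{(n,m)},\Delta)$.
   Context: Let $\Lambda^{(n,m)}=\{\mu\in\mathbb{Z}^n\mid m\ge\mu_1\ge\mu_2\ge\cdots\ge\mu_n\ge0\}$, and for $\mu\in\Lambda^{(n,m)}$ use the conventions $\mu_0\equiv m$, $\mu_{n+1}\equiv 0$. Let $e_1,\dots,e_n$ be the standard unit vectors of $\mathbb{Z}^n$, and $\delta_i=1$ if $i=0$, $\delta_i=0$ otherwise. The $q$-difference Toda hamiltonian $H$ acts on functions $\psi:\Lambda^{(n,m)}\to\mathbb{C}$ by $(H\psi)(\mu)=\bigl(\beta_+(1-q^{m-\mu_1})+\beta_-(1-q^{\mu_n})\bigr)\psi(\mu)+\sum_{1\le i\le n,\ \mu+e_i\in\Lambda^{(n,m)}}(1-\alpha_+q^{m-\mu_1-1})^{\delta_{i-1}}(1-q^{\mu_{i-1}-\mu_i})\psi(\mu+e_i)+\sum_{1\le i\le n,\ \mu-e_i\in\Lambda^{(n,m)}}(1-\alpha_-q^{\mu_n-1})^{\delta_{n-i}}(1-q^{\mu_i-\mu_{i+1}})\psi(\mu-e_i)$. With $(a;q)_0=1$, $(a;q)_l=(1-a)(1-aq)\cdots(1-aq^{l-1})$,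 define the positive weights $\Delta_\mu=\dfrac{(q;q)_m}{(\alpha_+;q)_{m-\mu_1}(\alpha_-;q)_{\mu_n}\prod_{0\le i\le n}(q;q)_{\mu_i-\mu_{i+1}}}$ for $\mu\in\Lambda^{(n,m)}$, and let $\ell^2(\Lambda^{(n,m)},\Delta)$ be the space of functions $\Lambda^{(n,m)}\to\mathbb{C}$ with inner product $\langle\psi,\phi\rangle_\Delta=\sum_{\mu\in\Lambda^{(n,m)}}\psi(\mu)\overline{\phi(\mu)}\Delta_\mu$. *)

theory Defs
  imports "HOL-Analysis.Analysis"
begin

text \<open>Points mu of Lambda^(n,m) are represented as functions nat => int, with the
  coordinates mu 1, ..., mu n and mu i = 0 for i outside {1..n} (canonical representative).\<close>

definition Lam :: "nat \<Rightarrow> nat \<Rightarrow> (nat \<Rightarrow> int) set" where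
  "Lam n m = {mu. (\<forall>i. i \<notin> {1..n} \<longrightarrow> mu i = 0)
                 \<and> (\<forall>i\<in>{1..n}. mu i \<le> int m \<and> 0 \<le> mu i)
                 \<and> (\<forall>i\<in>{1..<n}. mu (Suc i) \<le> mu i)}"

definition ext :: "nat \<Rightarrow> nat \<Rightarrow> (nat \<Rightarrow> int) \<Rightarrow> nat \<Rightarrow> int" where
  "ext n m mu i = (if i = 0 then int m else if i = Suc n then 0 else mu i)"

definition unitv :: "nat \<Rightarrow> nat \<Rightarrow> int" where
  "unitv i = (\<lambda>j. if j = i then 1 else 0)"

definition qpoch :: "real \<Rightarrow> real \<Rightarrow> nat \<Rightarrow> real" where
  "qpoch a q l = (\<Prod>j<l. (1 - a * q ^ j))"

definition todaH ::
  "nat \<Rightarrow> nat \<Rightarrow> real \<Rightarrow> real \<Rightarrow> real \<Rightarrow> real \<Rightarrow> real \<Rightarrow>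
   ((nat \<Rightarrow> int) \<Rightarrow> complex) \<Rightarrow> (nat \<Rightarrow> int) \<Rightarrow> complex" where
  "todaH n m q ap am bp bm psi mu =
     complex_of_real (bp * (1 - q ^ nat (int m - mu 1)) + bm * (1 - q ^ nat (mu n))) * psi mu
   + (\<Sum>i\<in>{i\<in>{1..n}. (\<lambda>j. mu j + unitv i j) \<in> Lam n m}.
        complex_of_real ((if i = 1 then 1 - ap * q ^ nat (int m - mu 1 - 1) else 1)
           * (1 - q ^ nat (ext n m mu (i - 1) - ext n m mu i)))
        * psi ((\<lambda>j. mu j + unitv i j)))
   + (\<Sum>i\<in>{i\<in>{1..n}. (\<lambda>j. mu j - unitv i j) \<in> Lam n m}.
        complex_of_real ((if i = n then 1 - am * q ^ nat (mu n - 1) else 1)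
           * (1 - q ^ nat (ext n m mu i - ext n m mu (Suc i))))
        * psi ((\<lambda>j. mu j - unitv i j)))"

definition Delta :: "nat \<Rightarrow> nat \<Rightarrow> real \<Rightarrow> real \<Rightarrow> real \<Rightarrow> (nat \<Rightarrow> int) \<Rightarrow> real" where
  "Delta n m q ap am mu =
     qpoch q q m /
     (qpoch ap q (nat (int m - mu 1)) * qpoch am q (nat (mu n))
      * (\<Prod>i\<in>{0..n}. qpoch q q (nat (ext n m mu i - ext n m mu (Suc i)))))"

definition innerD ::
  "nat \<Rightarrow> nat \<Rightarrow> real \<Rightarrow> real \<Rightarrow> real \<Rightarrow>
   ((nat \<Rightarrow> int) \<Rightarrow> complex) \<Rightarrow> ((nat \<Rightarrow> int) \<Rightarrow> complex) \<Rightarrow> complex" where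
  "innerD n m q ap am psi phi =
     (\<Sum>mu\<in>Lam n m. psi mu * cnj (phi mu) * complex_of_real (Delta n m q ap am mu))"

end

theory Submission
  imports Defs
begin

(* Write g_j(mu) = mu_j - mu_(j+1), j = 0..n, for the gaps of mu (with mu_0 = m, mu_(n+1) = 0).
   Then Delta_mu = (q;q)_m / prod_j w_j(g_j(mu)), where w_j(k) = (q;q)_k, times (ap;q)_k for j = 0
   and (am;q)_k for j = n, and w_j(k+1) = w_j(k) r_j(k).  Raising mu_i moves one unit from gap i-1 to
   gap i, and the hopping coefficients of H are exactly the ratios: the coefficient of psi(mu+e_i) in
   (H psi)(mu) is r_(i-1)(g_(i-1)(mu) - 1), that of psi(mu) in (H psi)(mu+e_i) is r_i(g_i(mu)).  This
   gives detailed balance Delta_mu A_i(mu) = Delta_(mu+e_i) B_i(mu+e_i), so the raising part of H is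
   the adjoint of its lowering part; the diagonal part is real, hence H is symmetric. *)

lemma prod_shift_balance:
  fixes w r :: "'a \<Rightarrow> nat \<Rightarrow> 'b::field" and g g' :: "'a \<Rightarrow> nat"
  assumes J: "finite J" "a \<in> J" "b \<in> J" "a \<noteq> b"
    and w_Suc: "\<And>j k. w j (Suc k) = w j k * r j k" and w_nonzero: "\<And>j k. w j k \<noteq> 0"
    and ga: "g a = Suc (g' a)" and gb: "g' b = Suc (g b)"
    and rest: "\<And>j. j \<in> J - {a, b} \<Longrightarrow> g j = g' j"
  shows "r a (g' a) / (\<Prod>j\<in>J. w j (g j)) = r b (g b) / (\<Prod>j\<in>J. w j (g' j))"
proof -
  have split: "(\<Prod>j\<in>J. f j) = f a * f b * (\<Prod>j\<in>J - {a, b}. f j)" for f :: "'a \<Rightarrow> 'b"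
    using J by (simp add: prod.remove[of J a] prod.remove[of "J - {a}" b] Diff_insert2[symmetric]
        insert_commute mult.assoc)
  define R where "R = (\<Prod>j\<in>J - {a, b}. w j (g j))"
  have R': "(\<Prod>j\<in>J - {a, b}. w j (g' j)) = R"
    unfolding R_def using rest by (intro prod.cong) auto
  have "r a (g' a) \<noteq> 0" using w_nonzero[of a "g a"] by (simp add: ga w_Suc)
  moreover have "r b (g b) \<noteq> 0" using w_nonzero[of b "g' b"] by (simp add: gb w_Suc)
  moreover have "R \<noteq> 0" unfolding R_def using J(1) w_nonzero by simp
  ultimately show ?thesis
    unfolding split[of "\<lambda>j. w j (g j)"] split[of "\<lambda>j. w j (g' j)"] R_def[symmetric] R' ga gb w_Suc
    using w_nonzero[of a "g' a"] w_nonzero[of b "g b"] by (simp add: field_simps)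
qed

lemma qpoch_Suc: "qpoch a q (Suc k) = qpoch a q k * (1 - a * q ^ k)"
  by (simp add: qpoch_def)

lemma qpoch_pos:
  assumes "\<bar>a\<bar> < 1" "\<bar>q\<bar> < 1"
  shows "qpoch a q k > 0"
  unfolding qpoch_def
proof (rule prod_pos)
  fix j
  have "\<bar>a\<bar> * \<bar>q\<bar> ^ j \<le> \<bar>a\<bar>"
    using assms by (intro mult_left_le power_le_one) auto
  then have "\<bar>a * q ^ j\<bar> < 1"
    using assms by (simp add: abs_mult power_abs)
  then show "0 < 1 - a * q ^ j" by linarith
qed

abbreviation raise_at :: "nat \<Rightarrow> (nat \<Rightarrow> int) \<Rightarrow> nat \<Rightarrow> int" where
  "raise_at i mu \<equiv> (\<lambda>j. mu j + unitv i j)"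

abbreviation lower_at :: "nat \<Rightarrow> (nat \<Rightarrow> int) \<Rightarrow> nat \<Rightarrow> int" where
  "lower_at i mu \<equiv> (\<lambda>j. mu j - unitv i j)"

lemma finite_Lam: "finite (Lam n m)"
proof (rule finite_subset)
  show "Lam n m \<subseteq> {f. \<forall>x. (x \<in> {1..n} \<longrightarrow> f x \<in> {0..int m}) \<and> (x \<notin> {1..n} \<longrightarrow> f x = 0)}"
    by (auto simp: Lam_def)
  show "finite {f. \<forall>x. (x \<in> {1..n} \<longrightarrow> f x \<in> {0..int m}) \<and> (x \<notin> {1..n} \<longrightarrow> f x = (0::int))}"
    by (rule finite_set_of_finite_funs) auto
qed

lemma sum_raise_at_eq_sum_lower_at:
  fixes F :: "(nat \<Rightarrow> int) \<Rightarrow> nat \<Rightarrow> 'a::comm_monoid_add"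
  shows "(\<Sum>mu\<in>Lam n m. \<Sum>i\<in>{i\<in>{1..n}. raise_at i mu \<in> Lam n m}. F mu i)
       = (\<Sum>nu\<in>Lam n m. \<Sum>i\<in>{i\<in>{1..n}. lower_at i nu \<in> Lam n m}. F (lower_at i nu) i)"
proof -
  have "(\<Sum>mu\<in>Lam n m. \<Sum>i\<in>{i\<in>{1..n}. raise_at i mu \<in> Lam n m}. F mu i)
      = (\<Sum>i\<in>{1..n}. \<Sum>mu\<in>{mu\<in>Lam n m. raise_at i mu \<in> Lam n m}. F mu i)"
    unfolding sum.inter_filter[OF finite_atLeastAtMost] sum.inter_filter[OF finite_Lam]
    by (rule sum.swap)
  also have "\<dots> = (\<Sum>i\<in>{1..n}. \<Sum>nu\<in>{nu\<in>Lam n m. lower_at i nu \<in> Lam n m}. F (lower_at i nu) i)"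
    by (intro sum.cong refl sum.reindex_bij_witness[of _ "lower_at i" "raise_at i" for i]) auto
  also have "\<dots> = (\<Sum>nu\<in>Lam n m. \<Sum>i\<in>{i\<in>{1..n}. lower_at i nu \<in> Lam n m}. F (lower_at i nu) i)"
    unfolding sum.inter_filter[OF finite_atLeastAtMost] sum.inter_filter[OF finite_Lam]
    by (rule sum.swap)
  finally show ?thesis .
qed

lemma ext_Suc_le:
  assumes "mu \<in> Lam n m" "j \<le> n"
  shows "ext n m mu (Suc j) \<le> ext n m mu j"
  using assms unfolding Lam_def ext_def
  by (cases "j = 0"; cases "j = n") (auto simp: Ball_def)

lemma ext_raise_at:
  assumes "i \<in> {1..n}"
  shows "ext n m (raise_at i mu) j = ext n m mu j + (if j = i then 1 else 0)"
  using assms by (auto simp: ext_def unitv_def)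

definition gap :: "nat \<Rightarrow> nat \<Rightarrow> (nat \<Rightarrow> int) \<Rightarrow> nat \<Rightarrow> nat" where
  "gap n m mu j = nat (ext n m mu j - ext n m mu (Suc j))"

lemma gap_raise_at:
  assumes mu: "mu \<in> Lam n m" and nu: "raise_at i mu \<in> Lam n m" and i: "i \<in> {1..n}"
  shows "gap n m mu (i - 1) = Suc (gap n m (raise_at i mu) (i - 1))"
    and "gap n m (raise_at i mu) i = Suc (gap n m mu i)"
    and "j \<noteq> i - 1 \<Longrightarrow> j \<noteq> i \<Longrightarrow> gap n m (raise_at i mu) j = gap n m mu j"
proof -
  obtain k where k: "i = Suc k" "k < n" using i by (cases i) auto
  have "ext n m (raise_at i mu) i \<le> ext n m (raise_at i mu) k"
    using ext_Suc_le[OF nu, of k] k by simp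
  then have "ext n m mu i + 1 \<le> ext n m mu k"
    unfolding ext_raise_at[OF i] using k by simp
  then show "gap n m mu (i - 1) = Suc (gap n m (raise_at i mu) (i - 1))"
    unfolding gap_def ext_raise_at[OF i] using k by simp
  show "gap n m (raise_at i mu) i = Suc (gap n m mu i)"
    using ext_Suc_le[OF mu, of i] i by (simp add: gap_def ext_raise_at)
  show "j \<noteq> i - 1 \<Longrightarrow> j \<noteq> i \<Longrightarrow> gap n m (raise_at i mu) j = gap n m mu j"
    using i by (simp add: gap_def ext_raise_at)
qed

definition gap_factor :: "nat \<Rightarrow> real \<Rightarrow> real \<Rightarrow> real \<Rightarrow> nat \<Rightarrow> nat \<Rightarrow> real" where
  "gap_factor n q ap am j k =
     qpoch q q k * (if j = 0 then qpoch ap q k else 1) * (if j = n then qpoch am q k else 1)"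

definition gap_factor_ratio :: "nat \<Rightarrow> real \<Rightarrow> real \<Rightarrow> real \<Rightarrow> nat \<Rightarrow> nat \<Rightarrow> real" where
  "gap_factor_ratio n q ap am j k =
     (1 - q ^ Suc k) * (if j = 0 then 1 - ap * q ^ k else 1) * (if j = n then 1 - am * q ^ k else 1)"

lemma gap_factor_Suc:
  "gap_factor n q ap am j (Suc k) = gap_factor n q ap am j k * gap_factor_ratio n q ap am j k"
  by (simp add: gap_factor_def gap_factor_ratio_def qpoch_Suc)

lemma gap_factor_pos:
  assumes "\<bar>q\<bar> < 1" "\<bar>ap\<bar> < 1" "\<bar>am\<bar> < 1"
  shows "gap_factor n q ap am j k > 0"
  using assms by (simp add: gap_factor_def qpoch_pos)

lemma Delta_eq_gap_product:
  assumes "1 \<le> n"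
  shows "Delta n m q ap am mu = qpoch q q m / (\<Prod>j\<in>{0..n}. gap_factor n q ap am j (gap n m mu j))"
proof -
  have "gap n m mu 0 = nat (int m - mu 1)" "gap n m mu n = nat (mu n)"
    using assms by (auto simp: gap_def ext_def)
  then have "(\<Prod>j\<in>{0..n}. gap_factor n q ap am j (gap n m mu j))
      = qpoch ap q (nat (int m - mu 1)) * qpoch am q (nat (mu n))
        * (\<Prod>j\<in>{0..n}. qpoch q q (nat (ext n m mu j - ext n m mu (Suc j))))"
    by (simp add: gap_factor_def prod.distrib gap_def)
  then show ?thesis by (simp add: Delta_def)
qed

definition up_coeff :: "nat \<Rightarrow> nat \<Rightarrow> real \<Rightarrow> real \<Rightarrow> (nat \<Rightarrow> int) \<Rightarrow> nat \<Rightarrow> real" where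
  "up_coeff n m q ap mu i = (if i = 1 then 1 - ap * q ^ nat (int m - mu 1 - 1) else 1)
     * (1 - q ^ nat (ext n m mu (i - 1) - ext n m mu i))"

definition down_coeff :: "nat \<Rightarrow> nat \<Rightarrow> real \<Rightarrow> real \<Rightarrow> (nat \<Rightarrow> int) \<Rightarrow> nat \<Rightarrow> real" where
  "down_coeff n m q am mu i = (if i = n then 1 - am * q ^ nat (mu n - 1) else 1)
     * (1 - q ^ nat (ext n m mu i - ext n m mu (Suc i)))"

lemma up_coeff_eq_gap_factor_ratio:
  assumes mu: "mu \<in> Lam n m" and nu: "raise_at i mu \<in> Lam n m" and i: "i \<in> {1..n}"
  shows "up_coeff n m q ap mu i = gap_factor_ratio n q ap am (i - 1) (gap n m (raise_at i mu) (i - 1))"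
proof -
  obtain k where k: "i = Suc k" "k < n" using i by (cases i) auto
  have "gap n m mu k = Suc (gap n m (raise_at i mu) k)"
    using gap_raise_at(1)[OF mu nu i] k by simp
  moreover have "gap n m (raise_at i mu) 0 = nat (int m - mu 1 - 1)" if "k = 0"
    using that k by (simp add: gap_def ext_def unitv_def)
  ultimately show ?thesis
    using k by (simp add: up_coeff_def gap_factor_ratio_def gap_def)
qed

lemma down_coeff_eq_gap_factor_ratio:
  assumes mu: "mu \<in> Lam n m" and nu: "raise_at i mu \<in> Lam n m" and i: "i \<in> {1..n}"
  shows "down_coeff n m q am (raise_at i mu) i = gap_factor_ratio n q ap am i (gap n m mu i)"
proof -
  have "gap n m mu n = nat (mu n)" using i by (simp add: gap_def ext_def)
  moreover have "0 \<le> mu n" using mu i by (auto simp: Lam_def)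
  ultimately show ?thesis
    using gap_raise_at(2)[OF mu nu i] i by (auto simp: down_coeff_def gap_factor_ratio_def gap_def unitv_def)
qed

lemma Delta_detailed_balance:
  assumes "\<bar>q\<bar> < 1" "\<bar>ap\<bar> < 1" "\<bar>am\<bar> < 1"
    and mu: "mu \<in> Lam n m" and nu: "raise_at i mu \<in> Lam n m" and i: "i \<in> {1..n}"
  shows "Delta n m q ap am mu * up_coeff n m q ap mu i
       = Delta n m q ap am (raise_at i mu) * down_coeff n m q am (raise_at i mu) i"
proof -
  have balance: "gap_factor_ratio n q ap am (i - 1) (gap n m (raise_at i mu) (i - 1))
          / (\<Prod>j\<in>{0..n}. gap_factor n q ap am j (gap n m mu j))
      = gap_factor_ratio n q ap am i (gap n m mu i)
          / (\<Prod>j\<in>{0..n}. gap_factor n q ap am j (gap n m (raise_at i mu) j))"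
  proof (rule prod_shift_balance)
    show "i - 1 \<in> {0..n}" "i \<in> {0..n}" "i - 1 \<noteq> i" using i by auto
    show "gap_factor n q ap am j k \<noteq> 0" for j k
      using gap_factor_pos[OF assms(1-3), of n j k] by linarith
    show "gap n m mu j = gap n m (raise_at i mu) j" if "j \<in> {0..n} - {i - 1, i}" for j
      using that gap_raise_at(3)[OF mu nu i] by simp
  qed (use gap_raise_at(1,2)[OF mu nu i] in \<open>simp_all add: gap_factor_Suc\<close>)
  have n: "1 \<le> n" using i by simp
  show ?thesis
    using balance
    unfolding Delta_eq_gap_product[OF n] up_coeff_eq_gap_factor_ratio[OF mu nu i, where am = am]
      down_coeff_eq_gap_factor_ratio[OF mu nu i, where ap = ap]
    by (simp only: times_divide_eq_left times_divide_eq_right[symmetric])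
qed

definition diag_coeff :: "nat \<Rightarrow> nat \<Rightarrow> real \<Rightarrow> real \<Rightarrow> real \<Rightarrow> (nat \<Rightarrow> int) \<Rightarrow> real" where
  "diag_coeff n m q bp bm mu = bp * (1 - q ^ nat (int m - mu 1)) + bm * (1 - q ^ nat (mu n))"

definition raising_part ::
  "nat \<Rightarrow> nat \<Rightarrow> real \<Rightarrow> real \<Rightarrow> ((nat \<Rightarrow> int) \<Rightarrow> complex) \<Rightarrow> (nat \<Rightarrow> int) \<Rightarrow> complex" where
  "raising_part n m q ap f mu = (\<Sum>i\<in>{i\<in>{1..n}. raise_at i mu \<in> Lam n m}.
     complex_of_real (up_coeff n m q ap mu i) * f (raise_at i mu))"

definition lowering_part ::
  "nat \<Rightarrow> nat \<Rightarrow> real \<Rightarrow> real \<Rightarrow> ((nat \<Rightarrow> int) \<Rightarrow> complex) \<Rightarrow> (nat \<Rightarrow> int) \<Rightarrow> complex" where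
  "lowering_part n m q am f mu = (\<Sum>i\<in>{i\<in>{1..n}. lower_at i mu \<in> Lam n m}.
     complex_of_real (down_coeff n m q am mu i) * f (lower_at i mu))"

lemma todaH_decompose:
  "todaH n m q ap am bp bm f = (\<lambda>mu. complex_of_real (diag_coeff n m q bp bm mu) * f mu
     + raising_part n m q ap f mu + lowering_part n m q am f mu)"
  by (simp add: fun_eq_iff todaH_def diag_coeff_def raising_part_def lowering_part_def
      up_coeff_def down_coeff_def)

lemma innerD_add_left:
  "innerD n m q ap am (\<lambda>mu. f mu + g mu) h = innerD n m q ap am f h + innerD n m q ap am g h"
  by (simp add: innerD_def sum.distrib algebra_simps)

lemma innerD_add_right:
  "innerD n m q ap am f (\<lambda>mu. g mu + h mu) = innerD n m q ap am f g + innerD n m q ap am f h"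
  by (simp add: innerD_def sum.distrib algebra_simps)

lemma innerD_commute: "innerD n m q ap am g f = cnj (innerD n m q ap am f g)"
  by (simp add: innerD_def mult_ac)

lemma innerD_real_mult:
  "innerD n m q ap am (\<lambda>mu. complex_of_real (c mu) * f mu) g
     = innerD n m q ap am f (\<lambda>mu. complex_of_real (c mu) * g mu)"
  by (simp add: innerD_def mult_ac)

lemma innerD_raising_part:
  assumes "\<bar>q\<bar> < 1" "\<bar>ap\<bar> < 1" "\<bar>am\<bar> < 1"
  shows "innerD n m q ap am (raising_part n m q ap psi) phi
       = innerD n m q ap am psi (lowering_part n m q am phi)"
proof -
  have "innerD n m q ap am (raising_part n m q ap psi) phi
      = (\<Sum>mu\<in>Lam n m. \<Sum>i\<in>{i\<in>{1..n}. raise_at i mu \<in> Lam n m}.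
           complex_of_real (Delta n m q ap am mu * up_coeff n m q ap mu i)
           * psi (raise_at i mu) * cnj (phi mu))"
    unfolding innerD_def raising_part_def sum_distrib_right by (simp add: mult_ac)
  also have "\<dots> = (\<Sum>nu\<in>Lam n m. \<Sum>i\<in>{i\<in>{1..n}. lower_at i nu \<in> Lam n m}.
           complex_of_real (Delta n m q ap am (lower_at i nu) * up_coeff n m q ap (lower_at i nu) i)
           * psi (raise_at i (lower_at i nu)) * cnj (phi (lower_at i nu)))"
    by (rule sum_raise_at_eq_sum_lower_at)
  also have "\<dots> = (\<Sum>nu\<in>Lam n m. \<Sum>i\<in>{i\<in>{1..n}. lower_at i nu \<in> Lam n m}.
           complex_of_real (Delta n m q ap am nu * down_coeff n m q am nu i)
           * psi nu * cnj (phi (lower_at i nu)))"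
    using Delta_detailed_balance[OF assms, of "lower_at i nu" n m i for nu i]
    by (intro sum.cong refl) auto
  also have "\<dots> = innerD n m q ap am psi (lowering_part n m q am phi)"
    by (simp add: innerD_def lowering_part_def sum_distrib_left sum_distrib_right mult_ac)
  finally show ?thesis .
qed

theorem proposition2p1:
  fixes n m :: nat and q ap am bp bm :: real
    and psi phi :: "(nat \<Rightarrow> int) \<Rightarrow> complex"
  assumes "1 \<le> n"
    and "-1 < q" "q < 1" "q \<noteq> 0"
    and "-1 < ap" "ap < 1" "-1 < am" "am < 1"
  shows "innerD n m q ap am (todaH n m q ap am bp bm psi) phi
       = innerD n m q ap am psi (todaH n m q ap am bp bm phi)"
proof -
  have bounds: "\<bar>q\<bar> < 1" "\<bar>ap\<bar> < 1" "\<bar>am\<bar> < 1" using assms by auto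
  have lowering_adjoint: "innerD n m q ap am (lowering_part n m q am psi) phi
      = innerD n m q ap am psi (raising_part n m q ap phi)"
    using innerD_raising_part[OF bounds, of n m phi psi] by (metis innerD_commute)
  show ?thesis
    by (simp add: todaH_decompose innerD_add_left innerD_add_right innerD_real_mult
        innerD_raising_part[OF bounds] lowering_adjoint add_ac)
qed

end
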